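(* Let $\rho_1,\rho_2$ be non-negative Borel measures on $\mathbb{T}^d$ with $\rho_k(\{\mathbf{1}\})=0$ and $\|\mathbf{1}-\Re\boldsymbol s\|\in L^1(\rho_k)$ for $k=1,2$. Suppose that $$\Re\int_{\mathbb{T}^d}(1-\boldsymbol s^{\boldsymbol p})\,d\rho_1(\boldsymbol s)=\Re\int_{\mathbb{T}^d}(1-\boldsymbol s^{\boldsymbol p})\,d\rho_2(\boldsymbol s)\quad\text{for all }\boldsymbol p\in\mathbb{Z}^d.$$ Then $\rho_1(B)=\rho_2(B)$ for every even Borel set $B\subset\mathbb{T}^d$.
   Context: $\boldsymbol s^{\boldsymbol p}=s_1^{p_1}\cdots s_d^{p_d}$, $\Re\boldsymbol s=(\Re s_1,\dots,\Re s_d)$, $\mathbf{1}=(1,\dots,1)$. A Borel set $B\subset\mathbb{T}^d$ is even if $B^{-1}=B$, where $\boldsymbol s^{-1}=(1/s_1,\dots,1/s_d)$. *)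

theory Defs
  imports "HOL-Analysis.Analysis"
begin

definition torus :: "(complex ^ 'd) set" where
  "torus = {s. \<forall>i. norm (s $ i) = 1}"

definition monom_pow :: "complex ^ 'd \<Rightarrow> int ^ 'd \<Rightarrow> complex" where
  "monom_pow s p = (\<Prod>i\<in>UNIV. (s $ i) powi (p $ i))"

definition tinv :: "complex ^ 'd \<Rightarrow> complex ^ 'd" where
  "tinv s = (\<chi> i. 1 / s $ i)"

definition one_minus_re :: "complex ^ 'd \<Rightarrow> real ^ 'd" where
  "one_minus_re s = (\<chi> i. 1 - Re (s $ i))"

definition even_borel :: "(complex ^ 'd) set \<Rightarrow> bool" where
  "even_borel B \<longleftrightarrow> B \<subseteq> torus \<and> B \<in> sets borel \<and> tinv ` B = B"

end

theory Submission
  imports Defs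
begin

text \<open>
  Put w(s) = \<Sum>j. 1 - Re s_j. On the torus w \<ge> 0, with equality only at 1, and
  1 - Re s^q \<le> |q|^2 w(s); so the measures \<nu>_k = w \<rho>_k are finite. Multiplication by
  1 - Re s_j averages the characters Re s^(p \<plusminus> e_j), hence the integrals of Re s^p against \<nu>_k
  are combinations of the integrals of Re (1 - s^q) against \<rho>_k, and coincide for k = 1, 2.
  Real trigonometric polynomials are uniformly dense in the continuous functions on the
  torus (Stone-Weierstrass) and Re s^p is invariant under the inversion \<iota>; so the
  symmetrized measures \<nu>_k + \<iota>_*\<nu>_k integrate every continuous function alike, and are
  equal. For an even Borel set B, \<rho>_k(B) = \<rho>_k(B - {1}) is half the integral of the
  \<iota>-invariant function 1_(B - {1}) / w against the symmetrized measure.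
\<close>

subsection \<open>Complex numbers of modulus one\<close>

lemma one_minus_Re_unit:
  fixes u :: complex
  assumes "norm u = 1"
  shows "1 - Re u = (cmod (1 - u))\<^sup>2 / 2"
proof -
  have "(Re u)\<^sup>2 + (Im u)\<^sup>2 = 1"
    using assms by (metis cmod_power2 one_power2)
  moreover have "(cmod (1 - u))\<^sup>2 = (1 - Re u)\<^sup>2 + (Im u)\<^sup>2"
    by (simp add: cmod_power2)
  ultimately show ?thesis
    by (simp add: power2_eq_square algebra_simps)
qed

lemma norm_one_minus_mult_unit_le:
  fixes a b :: complex
  assumes "norm a = 1"
  shows "cmod (1 - a * b) \<le> cmod (1 - a) + cmod (1 - b)"
proof -
  have "cmod (1 - a * b) = cmod ((1 - a) + a * (1 - b))"
    by (simp add: algebra_simps)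
  also have "\<dots> \<le> cmod (1 - a) + cmod (1 - b)"
    using norm_triangle_ineq[of "1 - a" "a * (1 - b)"] assms by (simp add: norm_mult)
  finally show ?thesis .
qed

lemma norm_one_minus_power_unit_le:
  fixes z :: complex
  assumes "norm z = 1"
  shows "cmod (1 - z ^ n) \<le> real n * cmod (1 - z)"
proof (induction n)
  case (Suc n)
  then show ?case
    using norm_one_minus_mult_unit_le[OF assms, of "z ^ n"] by (simp add: algebra_simps)
qed simp

lemma norm_one_minus_power_int_unit_le:
  fixes z :: complex
  assumes z: "norm z = 1"
  shows "cmod (1 - z powi k) \<le> \<bar>real_of_int k\<bar> * cmod (1 - z)"
proof (cases "k \<ge> 0")
  case True
  then show ?thesis
    using norm_one_minus_power_unit_le[OF z, of "nat k"] by (simp add: power_int_def)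
next
  case False
  have "cmod (1 - inverse w) = cmod (1 - w)" if "norm w = 1" for w :: complex
  proof -
    have "w \<noteq> 0" using that by auto
    then have "1 - inverse w = - (1 - w) * inverse w" by (simp add: field_simps)
    then show ?thesis using that by (simp add: norm_mult norm_inverse norm_minus_commute)
  qed
  then have "cmod (1 - z powi k) = cmod (1 - z ^ nat (- k))"
    using False z by (simp add: power_int_def norm_power power_inverse)
  also have "\<dots> \<le> \<bar>real_of_int k\<bar> * cmod (1 - z)"
    using norm_one_minus_power_unit_le[OF z, of "nat (- k)"] False by simp
  finally show ?thesis .
qed

lemma norm_one_minus_prod_unit_le:
  fixes a :: "'i \<Rightarrow> complex"
  assumes "\<And>i. i \<in> A \<Longrightarrow> norm (a i) = 1"
  shows "cmod (1 - prod a A) \<le> (\<Sum>i\<in>A. cmod (1 - a i))"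
  using assms
proof (induction A rule: infinite_finite_induct)
  case (insert x F)
  then show ?case
    using norm_one_minus_mult_unit_le[of "a x" "prod a F"] by simp
qed simp_all

lemma inverse_unit_eq_cnj:
  fixes z :: complex
  assumes "norm z = 1"
  shows "inverse z = cnj z"
  using complex_div_cnj[of 1 z] assms by (simp add: inverse_eq_divide)

subsection \<open>The torus\<close>

lemma mem_torus: "s \<in> torus \<longleftrightarrow> (\<forall>i. norm (s $ i) = 1)"
  by (simp add: torus_def)

lemma torus_nth_nonzero: "s \<in> torus \<Longrightarrow> s $ i \<noteq> 0"
  by (auto simp: mem_torus dest: spec[of _ i])

lemma one_in_torus: "(\<chi> i. 1) \<in> torus"
  by (simp add: mem_torus)

lemma closed_torus: "closed (torus :: (complex ^ 'd) set)"
proof -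
  have "(torus :: (complex ^ 'd) set) = (\<Inter>i. {s. norm (s $ i) = 1})"
    by (auto simp: mem_torus)
  also have "closed \<dots>"
    by (intro closed_INT ballI closed_Collect_eq continuous_intros)
  finally show ?thesis .
qed

lemma compact_torus: "compact torus"
proof -
  have "norm s \<le> real CARD('d)" if "s \<in> (torus :: (complex ^ 'd) set)" for s
    using L2_set_le_sum[of UNIV "\<lambda>i. norm (s $ i)"] that by (simp add: norm_vec_def mem_torus)
  then have "bounded (torus :: (complex ^ 'd) set)"
    unfolding bounded_iff by blast
  with closed_torus show ?thesis
    by (simp add: compact_eq_bounded_closed)
qed

lemma sets_borel_torus [measurable]: "torus \<in> sets borel"
  by (rule borel_closed[OF closed_torus])

lemma tinv_tinv [simp]: "tinv (tinv s) = s"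
  by (simp add: tinv_def vec_eq_iff)

lemma tinv_one [simp]: "tinv (\<chi> i. 1) = (\<chi> i. 1)"
  by (simp add: tinv_def vec_eq_iff)

lemma tinv_nth_torus: "s \<in> torus \<Longrightarrow> tinv s $ i = cnj (s $ i)"
  by (simp add: tinv_def mem_torus inverse_unit_eq_cnj flip: inverse_eq_divide)

lemma tinv_in_torus: "s \<in> torus \<Longrightarrow> tinv s \<in> torus"
  by (simp add: mem_torus tinv_nth_torus)

lemma image_tinv_eq_vimage: "tinv ` A = tinv -` A"
  by (auto simp: image_iff) (metis tinv_tinv)

lemma continuous_on_tinv: "continuous_on torus tinv"
  unfolding tinv_def by (auto intro!: continuous_intros torus_nth_nonzero)

lemma monom_pow_tinv: "monom_pow (tinv s) p = inverse (monom_pow s p)"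
  by (simp add: monom_pow_def tinv_def power_int_inverse flip: inverse_eq_divide prod_inversef[unfolded o_def])

lemma monom_pow_zero [simp]: "monom_pow s 0 = 1"
  by (simp add: monom_pow_def)

lemma monom_pow_add:
  "s \<in> torus \<Longrightarrow> monom_pow s (p + q) = monom_pow s p * monom_pow s q"
  by (simp add: monom_pow_def power_int_add torus_nth_nonzero prod.distrib)

lemma norm_monom_pow: "s \<in> torus \<Longrightarrow> norm (monom_pow s p) = 1"
  by (simp add: monom_pow_def norm_power_int mem_torus flip: prod_norm)

lemma monom_pow_uminus:
  assumes s: "s \<in> torus"
  shows "monom_pow s (- p) = cnj (monom_pow s p)"
proof -
  have "monom_pow s (- p) = inverse (monom_pow s p)"
    by (simp add: monom_pow_def power_int_minus flip: prod_inversef[unfolded o_def])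
  then show ?thesis
    using s by (simp add: inverse_unit_eq_cnj norm_monom_pow)
qed

lemma monom_pow_axis: "monom_pow s (axis i 1) = s $ i"
proof -
  have "s $ j powi axis i 1 $ j = (if j = i then s $ i else 1)" for j
    by (simp add: axis_def)
  then show ?thesis
    by (simp add: monom_pow_def)
qed

lemma continuous_on_monom_pow: "continuous_on torus (\<lambda>s. monom_pow s p)"
  unfolding monom_pow_def by (auto intro!: continuous_intros torus_nth_nonzero)

subsection \<open>Finite measures on a closed set\<close>

lemma space_eq_if_sets_restrict_space:
  assumes "sets M = sets (restrict_space borel T)"
  shows "space M = T"
  using sets_eq_imp_space_eq[OF assms] by (simp add: space_restrict_space)

lemma sets_restrict_space_borel_iff:
  "T \<in> sets borel \<Longrightarrow> A \<in> sets (restrict_space borel T) \<longleftrightarrow> A \<in> sets borel \<and> A \<subseteq> T"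
  by (auto simp: sets_restrict_space_iff)

lemma borel_measurable_sets_restrict:
  assumes "sets M = sets (restrict_space borel T)" and "f \<in> borel_measurable borel"
  shows "f \<in> borel_measurable M"
  using measurable_restrict_space1[OF assms(2)] measurable_cong_sets[OF assms(1) refl] by blast

lemma borel_measurable_continuous_on_sets_restrict:
  assumes "sets M = sets (restrict_space borel T)" and "continuous_on T f"
  shows "f \<in> borel_measurable M"
  using borel_measurable_continuous_on_restrict[OF assms(2)] measurable_cong_sets[OF assms(1) refl]
  by blast

lemma integrable_continuous_on_compact:
  fixes f :: "'a::topological_space \<Rightarrow> real"
  assumes "finite_measure M" and sets: "sets M = sets (restrict_space borel T)"
    and "compact T" and cont: "continuous_on T f"
  shows "integrable M f"
proof -
  obtain C where "\<forall>x\<in>T. norm (f x) \<le> C"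
    using compact_imp_bounded[OF compact_continuous_image[OF cont \<open>compact T\<close>]]
    by (auto simp: bounded_iff)
  then have "AE x in M. norm (f x) \<le> C"
    by (intro AE_I2) (simp add: space_eq_if_sets_restrict_space[OF sets])
  then show ?thesis
    using finite_measure.integrable_const_bound[OF \<open>finite_measure M\<close>]
      borel_measurable_continuous_on_sets_restrict[OF sets cont]
    by blast
qed

lemma integral_eq_if_uniform_approx:
  fixes f :: "'a \<Rightarrow> real"
  assumes M: "finite_measure M" and N: "finite_measure N"
    and space_M: "space M = T" and space_N: "space N = T"
    and f_M: "integrable M f" and f_N: "integrable N f"
    and approx: "\<And>e. 0 < e \<Longrightarrow> \<exists>g. integrable M g \<and> integrable N g \<and>
      (\<integral>x. g x \<partial>M) = (\<integral>x. g x \<partial>N) \<and> (\<forall>x\<in>T. \<bar>f x - g x\<bar> \<le> e)"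
  shows "(\<integral>x. f x \<partial>M) = (\<integral>x. f x \<partial>N)"
proof -
  have close: "\<bar>(\<integral>x. f x \<partial>L) - (\<integral>x. g x \<partial>L)\<bar> \<le> e * measure L T"
    if "finite_measure L" "space L = T" "integrable L f" "integrable L g" "\<forall>x\<in>T. \<bar>f x - g x\<bar> \<le> e"
    for L g e
  proof -
    have "\<bar>\<integral>x. f x - g x \<partial>L\<bar> \<le> (\<integral>x. \<bar>f x - g x\<bar> \<partial>L)"
      using integral_norm_bound[of L "\<lambda>x. f x - g x"] by simp
    also have "\<dots> \<le> (\<integral>x. e \<partial>L)"
      using that by (intro integral_mono Bochner_Integration.integrable_diff
          finite_measure.integrable_const integrable_abs) auto
    finally have "\<bar>\<integral>x. f x - g x \<partial>L\<bar> \<le> (\<integral>x. e \<partial>L)" .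
    then show ?thesis
      using that by (simp add: Bochner_Integration.integral_diff mult.commute)
  qed
  let ?C = "measure M T + measure N T"
  have C: "0 < ?C + 1"
    using measure_nonneg[of M T] measure_nonneg[of N T] by linarith
  have "\<bar>(\<integral>x. f x \<partial>M) - (\<integral>x. f x \<partial>N)\<bar> \<le> e" if "0 < e" for e
  proof -
    have "0 < e / (?C + 1)"
      using that C by simp
    then obtain g where g: "integrable M g" "integrable N g" "(\<integral>x. g x \<partial>M) = (\<integral>x. g x \<partial>N)"
      "\<forall>x\<in>T. \<bar>f x - g x\<bar> \<le> e / (?C + 1)"
      using approx by blast
    have "\<bar>(\<integral>x. f x \<partial>M) - (\<integral>x. f x \<partial>N)\<bar> \<le>
        e / (?C + 1) * measure M T + e / (?C + 1) * measure N T"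
      using close[OF M space_M f_M g(1,4)] close[OF N space_N f_N g(2,4)] g(3) by linarith
    also have "\<dots> = e * (?C / (?C + 1))"
      by (simp add: field_simps add_divide_distrib)
    also have "\<dots> \<le> e"
      using that C by (intro mult_left_le) (simp_all add: divide_le_eq_1)
    finally show ?thesis .
  qed
  then show ?thesis
    by (metis abs_le_zero_iff field_le_epsilon add_0 eq_iff_diff_eq_0)
qed

lemma INF_ennreal_one_minus_mult:
  fixes d :: real
  assumes "0 \<le> d"
  shows "(INF n. ennreal (max 0 (1 - real n * d))) = (if d = 0 then 1 else 0)"
proof (cases "d = 0")
  case False
  then obtain N :: nat where "1 < real N * d"
    using ex_less_of_nat_mult[of d 1] assms by force
  then have "(INF n. ennreal (max 0 (1 - real n * d))) \<le> 0"
    by (intro INF_lower2[of N]) auto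
  then show ?thesis
    using False by simp
qed simp

lemma sets_restrict_space_borel_closed:
  fixes T :: "'a::topological_space set"
  assumes "closed T"
  shows "sets (restrict_space borel T) = sigma_sets T {F. closed F \<and> F \<subseteq> T}"
proof -
  have "sets (borel :: 'a measure) = sigma_sets UNIV (Collect closed)"
    unfolding borel_eq_closed by (rule sets_measure_of) simp
  moreover have "T \<in> sigma_sets UNIV (Collect closed)"
    using assms by auto
  moreover have "(\<inter>) T ` Collect closed = {F. closed F \<and> F \<subseteq> T}"
  proof (intro equalityI subsetI)
    fix F
    assume "F \<in> {F. closed F \<and> F \<subseteq> T}"
    then have "F = T \<inter> F" "closed F" by auto
    then show "F \<in> (\<inter>) T ` Collect closed" by blast
  qed (use assms in auto)
  ultimately show ?thesis
    unfolding sets_restrict_space by (simp add: sigma_sets_Int)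
qed

lemma emeasure_closed_eq_INF_nn_integral:
  fixes M :: "'a::metric_space measure"
  assumes sets_M: "sets M = sets (restrict_space borel T)" and finite: "emeasure M T \<noteq> \<infinity>"
    and F: "closed F" "F \<subseteq> T" "F \<noteq> {}"
  shows "emeasure M F = (INF n. \<integral>\<^sup>+x. ennreal (max 0 (1 - real n * infdist x F)) \<partial>M)"
proof -
  let ?u = "\<lambda>n x. ennreal (max 0 (1 - real n * infdist x F))"
  have space_M: "space M = T"
    by (rule space_eq_if_sets_restrict_space[OF sets_M])
  have "F \<in> sets M"
    using F borel_closed by (auto simp: sets_M sets_restrict_space)
  have "(INF n. ?u n x) = indicator F x" for x
    using in_closed_iff_infdist_zero[OF F(1,3)] infdist_nonneg[of x F]
    by (simp add: INF_ennreal_one_minus_mult)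
  then have "emeasure M F = (\<integral>\<^sup>+x. (INF n. ?u n x) \<partial>M)"
    using \<open>F \<in> sets M\<close> by simp
  also have "\<dots> = (INF n. \<integral>\<^sup>+x. ?u n x \<partial>M)"
  proof (rule nn_integral_monotone_convergence_INF_decseq)
    show "decseq ?u"
      by (intro decseq_SucI le_funI ennreal_leI max.mono diff_left_mono mult_right_mono infdist_nonneg)
        simp_all
    have "(\<lambda>x. max 0 (1 - real n * infdist x F)) \<in> borel_measurable M" for n
      by (intro borel_measurable_continuous_on_sets_restrict[OF sets_M] continuous_intros)
    then show "?u n \<in> borel_measurable M" for n
      by measurable
    have "(\<integral>\<^sup>+x. ?u n x \<partial>M) \<le> (\<integral>\<^sup>+x. 1 \<partial>M)" for n
      by (intro nn_integral_mono) (simp add: infdist_nonneg)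
    also have "\<dots> < \<infinity>"
      using finite by (simp add: space_M top.not_eq_extremum)
    finally show "(\<integral>\<^sup>+x. ?u n x \<partial>M) < \<infinity>" for n .
  qed
  finally show ?thesis .
qed

lemma measure_eqI_nn_integral_continuous:
  fixes M N :: "'a::metric_space measure"
  assumes T: "closed T"
    and sets_M: "sets M = sets (restrict_space borel T)"
    and sets_N: "sets N = sets (restrict_space borel T)"
    and finite: "emeasure M T \<noteq> \<infinity>"
    and eq: "\<And>f. continuous_on T f \<Longrightarrow> (\<And>x. 0 \<le> f x) \<Longrightarrow>
      (\<integral>\<^sup>+x. ennreal (f x) \<partial>M) = (\<integral>\<^sup>+x. ennreal (f x) \<partial>N)"
  shows "M = N"
proof (rule measure_eqI_generator_eq[where E = "{F. closed F \<and> F \<subseteq> T}" and \<Omega> = T and A = "\<lambda>_. T"])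
  show "Int_stable {F. closed F \<and> F \<subseteq> T}"
    by (auto simp: Int_stable_def)
  show "sets M = sigma_sets T {F. closed F \<and> F \<subseteq> T}" "sets N = sigma_sets T {F. closed F \<and> F \<subseteq> T}"
    using sets_M sets_N sets_restrict_space_borel_closed[OF T] by simp_all
  show "range (\<lambda>_. T) \<subseteq> {F. closed F \<and> F \<subseteq> T}" "(\<Union>i. T) = T" "emeasure M T \<noteq> \<infinity>" for i :: nat
    using T finite by auto
  have "emeasure N T = emeasure M T"
    using eq[of "\<lambda>_. 1"] sets_M sets_N by (simp add: space_eq_if_sets_restrict_space)
  with finite have finite_N: "emeasure N T \<noteq> \<infinity>"
    by simp
  fix F
  assume F: "F \<in> {F. closed F \<and> F \<subseteq> T}"
  show "emeasure M F = emeasure N F"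
  proof (cases "F = {}")
    case False
    have "(\<integral>\<^sup>+x. ennreal (max 0 (1 - real n * infdist x F)) \<partial>M) =
        (\<integral>\<^sup>+x. ennreal (max 0 (1 - real n * infdist x F)) \<partial>N)" for n
      by (intro eq continuous_intros) simp
    then show ?thesis
      using emeasure_closed_eq_INF_nn_integral[OF sets_M finite, of F]
        emeasure_closed_eq_INF_nn_integral[OF sets_N finite_N, of F] F False
      by simp
  qed simp
next
  show "{F. closed F \<and> F \<subseteq> T} \<subseteq> Pow T"
    by blast
qed

definition add_measure :: "'a measure \<Rightarrow> 'a measure \<Rightarrow> 'a measure" where
  "add_measure M N = measure_of (space M) (sets M) (\<lambda>A. emeasure M A + emeasure N A)"

lemma sets_add_measure [simp, measurable_cong]: "sets (add_measure M N) = sets M"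
  by (simp add: add_measure_def sets.sets_measure_of_eq)

lemma space_add_measure [simp]: "space (add_measure M N) = space M"
  by (simp add: add_measure_def)

lemma emeasure_add_measure:
  assumes sets_N: "sets N = sets M" and A: "A \<in> sets M"
  shows "emeasure (add_measure M N) A = emeasure M A + emeasure N A"
  unfolding add_measure_def
proof (rule emeasure_measure_of_sigma[OF sets.sigma_algebra_axioms _ _ A])
  show "positive (sets M) (\<lambda>A. emeasure M A + emeasure N A)"
    by (simp add: positive_def)
  show "countably_additive (sets M) (\<lambda>A. emeasure M A + emeasure N A)"
  proof (rule countably_additiveI)
    fix A :: "nat \<Rightarrow> 'a set"
    assume "range A \<subseteq> sets M" "disjoint_family A"
    then show "(\<Sum>i. emeasure M (A i) + emeasure N (A i)) = emeasure M (\<Union>i. A i) + emeasure N (\<Union>i. A i)"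
      using sets_N by (simp add: suminf_add[OF summableI summableI, symmetric] suminf_emeasure)
  qed
qed

lemma nn_integral_add_measure:
  assumes sets_N: "sets N = sets M" and f: "f \<in> borel_measurable M"
  shows "(\<integral>\<^sup>+x. f x \<partial>add_measure M N) = (\<integral>\<^sup>+x. f x \<partial>M) + (\<integral>\<^sup>+x. f x \<partial>N)"
  using f
proof (induction rule: borel_measurable_induct)
  case (cong f g)
  have "(\<integral>\<^sup>+x. f x \<partial>L) = (\<integral>\<^sup>+x. g x \<partial>L)" if "space L = space M" for L
    using cong.hyps(3) that by (intro nn_integral_cong) auto
  then show ?case
    using cong.IH sets_eq_imp_space_eq[OF sets_N] by simp
next
  case (set A)
  then show ?case
    using sets_N by (simp add: emeasure_add_measure)
next
  case (mult u c)
  then show ?case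
    using sets_N by (simp add: nn_integral_cmult distrib_left measurable_cong_sets[OF refl sets_N])
next
  case (add u v)
  then show ?case
    using sets_N by (simp add: nn_integral_add measurable_cong_sets[OF refl sets_N] ac_simps)
next
  case (seq U)
  have "incseq (\<lambda>i. \<integral>\<^sup>+x. U i x \<partial>L)" for L
    using \<open>incseq U\<close> by (auto intro!: nn_integral_mono simp: incseq_def le_fun_def)
  with seq show ?case
    using sets_N
    by (simp add: nn_integral_monotone_convergence_SUP measurable_cong_sets[OF refl sets_N]
        ennreal_SUP_add image_comp)
qed

subsection \<open>The weight\<close>

definition weight :: "complex ^ 'd \<Rightarrow> real" where
  "weight s = (\<Sum>i\<in>UNIV. 1 - Re (s $ i))"

lemma continuous_on_weight [continuous_intros]: "continuous_on A weight"
  unfolding weight_def by (intro continuous_intros)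

lemma borel_measurable_weight [measurable]: "weight \<in> borel_measurable borel"
  by (intro borel_measurable_continuous_onI continuous_on_weight)

lemma weight_tinv: "s \<in> torus \<Longrightarrow> weight (tinv s) = weight s"
  by (simp add: weight_def tinv_nth_torus)

lemma one_minus_Re_nonneg_torus: "s \<in> torus \<Longrightarrow> 0 \<le> 1 - Re (s $ i)"
  using complex_Re_le_cmod[of "s $ i"] by (simp add: mem_torus)

lemma weight_nonneg: "s \<in> torus \<Longrightarrow> 0 \<le> weight s"
  unfolding weight_def by (intro sum_nonneg one_minus_Re_nonneg_torus)

lemma weight_pos:
  assumes s: "s \<in> torus" and "s \<noteq> (\<chi> i. 1)"
  shows "0 < weight s"
proof -
  obtain i where "s $ i \<noteq> 1"
    using \<open>s \<noteq> (\<chi> i. 1)\<close> by (auto simp: vec_eq_iff)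
  then have "0 < (cmod (1 - s $ i))\<^sup>2 / 2"
    by simp
  also have "\<dots> = 1 - Re (s $ i)"
    using s by (simp add: one_minus_Re_unit mem_torus)
  moreover have "1 - Re (s $ i) \<le> weight s"
    unfolding weight_def
    using one_minus_Re_nonneg_torus[OF s] by (intro member_le_sum) auto
  ultimately show ?thesis by linarith
qed

lemma weight_le_norm_one_minus_re: "weight (s :: complex ^ 'd) \<le> real CARD('d) * norm (one_minus_re s)"
proof -
  have "weight s = (\<Sum>i\<in>UNIV. one_minus_re s $ i)"
    by (simp add: weight_def one_minus_re_def)
  also have "\<dots> \<le> (\<Sum>i\<in>(UNIV :: 'd set). norm (one_minus_re s))"
    by (rule sum_mono) (meson abs_ge_self component_le_norm_cart order_trans)
  finally show ?thesis by simp
qed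

lemma one_minus_Re_monom_pow_le:
  assumes s: "s \<in> torus"
  shows "1 - Re (monom_pow s q) \<le> (\<Sum>i\<in>UNIV. (real_of_int (q $ i))\<^sup>2) * weight s"
proof -
  have u: "norm (s $ i) = 1" for i
    using s by (simp add: mem_torus)
  have "cmod (1 - monom_pow s q) \<le> (\<Sum>i\<in>UNIV. cmod (1 - s $ i powi q $ i))"
    unfolding monom_pow_def by (rule norm_one_minus_prod_unit_le) (simp add: u norm_power_int)
  also have "\<dots> \<le> (\<Sum>i\<in>UNIV. \<bar>real_of_int (q $ i)\<bar> * cmod (1 - s $ i))"
    by (intro sum_mono norm_one_minus_power_int_unit_le u)
  finally have "(cmod (1 - monom_pow s q))\<^sup>2 \<le> (\<Sum>i\<in>UNIV. \<bar>real_of_int (q $ i)\<bar> * cmod (1 - s $ i))\<^sup>2"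
    by (intro power_mono) auto
  also have "\<dots> \<le> (\<Sum>i\<in>UNIV. \<bar>real_of_int (q $ i)\<bar>\<^sup>2) * (\<Sum>i\<in>UNIV. (cmod (1 - s $ i))\<^sup>2)"
    by (rule Cauchy_Schwarz_ineq_sum)
  also have "(\<Sum>i\<in>UNIV. (cmod (1 - s $ i))\<^sup>2) = 2 * weight s"
    unfolding weight_def sum_distrib_left by (intro sum.cong refl) (simp add: one_minus_Re_unit[OF u])
  finally show ?thesis
    using one_minus_Re_unit[OF norm_monom_pow[OF s, of q]] by simp
qed

lemma weight_mult_Re_monom_pow:
  assumes s: "s \<in> torus"
  shows "weight s * Re (monom_pow s p) = (\<Sum>j\<in>UNIV.
     (Re (1 - monom_pow s (p + axis j 1)) + Re (1 - monom_pow s (p - axis j 1))) / 2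
      - Re (1 - monom_pow s p))"
proof -
  have "(1 - Re (s $ j)) * Re (monom_pow s p) =
      (Re (1 - monom_pow s (p + axis j 1)) + Re (1 - monom_pow s (p - axis j 1))) / 2
      - Re (1 - monom_pow s p)" for j
  proof -
    have "monom_pow s (p + axis j 1) = monom_pow s p * s $ j"
      by (simp add: monom_pow_add[OF s] monom_pow_axis)
    moreover have "monom_pow s (p - axis j 1) = monom_pow s p * cnj (s $ j)"
      using monom_pow_add[OF s, of p "- axis j 1"] monom_pow_uminus[OF s, of "axis j 1"]
      by (simp add: monom_pow_axis)
    moreover have "Re (z * w) + Re (z * cnj w) = 2 * Re z * Re w" for z w :: complex
      by simp
    ultimately show ?thesis
      by (simp add: algebra_simps add_divide_distrib diff_divide_distrib)
  qed
  then show ?thesis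
    by (simp add: weight_def sum_distrib_right)
qed

context
  fixes \<rho> :: "(complex ^ 'd) measure"
  assumes sets_\<rho>: "sets \<rho> = sets (restrict_space borel torus)"
    and integrable_\<rho>: "integrable \<rho> (\<lambda>s. norm (one_minus_re s))"
begin

lemma borel_measurable_weight_\<rho> [measurable]: "weight \<in> borel_measurable \<rho>"
  by (rule borel_measurable_sets_restrict[OF sets_\<rho> borel_measurable_weight])

lemma integrable_weight: "integrable \<rho> weight"
proof (rule Bochner_Integration.integrable_bound)
  show "integrable \<rho> (\<lambda>s. real CARD('d) * norm (one_minus_re s))"
    using integrable_\<rho> by simp
  show "weight \<in> borel_measurable \<rho>"
    by measurable
  show "AE s in \<rho>. norm (weight s) \<le> norm (real CARD('d) * norm (one_minus_re s))"
    by (intro AE_I2)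
      (simp add: space_eq_if_sets_restrict_space[OF sets_\<rho>] weight_nonneg weight_le_norm_one_minus_re)
qed

lemma integrable_one_minus_Re_monom_pow: "integrable \<rho> (\<lambda>s. Re (1 - monom_pow s q))"
proof (rule Bochner_Integration.integrable_bound)
  let ?C = "\<Sum>i\<in>UNIV. (real_of_int (q $ i))\<^sup>2"
  show "integrable \<rho> (\<lambda>s. ?C * weight s)"
    using integrable_weight by simp
  show "(\<lambda>s. Re (1 - monom_pow s q)) \<in> borel_measurable \<rho>"
    by (intro borel_measurable_continuous_on_sets_restrict[OF sets_\<rho>] continuous_intros
        continuous_on_monom_pow)
  show "AE s in \<rho>. norm (Re (1 - monom_pow s q)) \<le> norm (?C * weight s)"
  proof (intro AE_I2)
    fix s assume "s \<in> space \<rho>"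
    then have s: "s \<in> torus"
      by (simp add: space_eq_if_sets_restrict_space[OF sets_\<rho>])
    have "0 \<le> 1 - Re (monom_pow s q)"
      using complex_Re_le_cmod[of "monom_pow s q"] norm_monom_pow[OF s] by simp
    moreover have "0 \<le> ?C * weight s"
      by (intro mult_nonneg_nonneg sum_nonneg weight_nonneg[OF s]) auto
    ultimately show "norm (Re (1 - monom_pow s q)) \<le> norm (?C * weight s)"
      using one_minus_Re_monom_pow_le[OF s, of q] by simp
  qed
qed

lemma finite_measure_density_weight: "finite_measure (density \<rho> (\<lambda>s. ennreal (weight s)))"
proof
  let ?\<nu> = "density \<rho> (\<lambda>s. ennreal (weight s))"
  have "emeasure ?\<nu> (space ?\<nu>) = (\<integral>\<^sup>+ s. ennreal (weight s) \<partial>\<rho>)"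
    by (subst emeasure_density) (auto intro!: nn_integral_cong)
  also have "\<dots> = ennreal (\<integral>s. weight s \<partial>\<rho>)"
    by (intro nn_integral_eq_integral integrable_weight AE_I2)
      (simp add: space_eq_if_sets_restrict_space[OF sets_\<rho>] weight_nonneg)
  finally show "emeasure ?\<nu> (space ?\<nu>) \<noteq> \<infinity>"
    by simp
qed

lemma integral_Re_monom_pow_density_weight:
  "(\<integral>s. Re (monom_pow s p) \<partial>density \<rho> (\<lambda>s. ennreal (weight s))) =
    (\<Sum>j\<in>UNIV. ((\<integral>s. Re (1 - monom_pow s (p + axis j 1)) \<partial>\<rho>)
       + (\<integral>s. Re (1 - monom_pow s (p - axis j 1)) \<partial>\<rho>)) / 2 - (\<integral>s. Re (1 - monom_pow s p) \<partial>\<rho>))"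
proof -
  note integrable = integrable_one_minus_Re_monom_pow
  have "(\<integral>s. Re (monom_pow s p) \<partial>density \<rho> (\<lambda>s. ennreal (weight s))) =
      (\<integral>s. weight s * Re (monom_pow s p) \<partial>\<rho>)"
    by (subst integral_density)
      (auto intro!: AE_I2 borel_measurable_continuous_on_sets_restrict[OF sets_\<rho>] continuous_intros
        continuous_on_monom_pow simp: space_eq_if_sets_restrict_space[OF sets_\<rho>] weight_nonneg)
  also have "\<dots> = (\<integral>s. (\<Sum>j\<in>UNIV.
      (Re (1 - monom_pow s (p + axis j 1)) + Re (1 - monom_pow s (p - axis j 1))) / 2
       - Re (1 - monom_pow s p)) \<partial>\<rho>)"
    by (intro Bochner_Integration.integral_cong refl)
      (simp add: space_eq_if_sets_restrict_space[OF sets_\<rho>] weight_mult_Re_monom_pow)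
  also have "\<dots> = (\<Sum>j\<in>UNIV. ((\<integral>s. Re (1 - monom_pow s (p + axis j 1)) \<partial>\<rho>)
       + (\<integral>s. Re (1 - monom_pow s (p - axis j 1)) \<partial>\<rho>)) / 2 - (\<integral>s. Re (1 - monom_pow s p) \<partial>\<rho>))"
    by (simp add: integrable integral_sum integral_diff integral_add
        del: minus_complex.sel)
  finally show ?thesis .
qed

end

subsection \<open>Real trigonometric polynomials\<close>

inductive_set trig_poly :: "(complex ^ 'd \<Rightarrow> real) set" where
  monom: "(\<lambda>s. Re (c * monom_pow s p)) \<in> trig_poly"
| add: "f \<in> trig_poly \<Longrightarrow> g \<in> trig_poly \<Longrightarrow> (\<lambda>s. f s + g s) \<in> trig_poly"

lemma continuous_on_trig_poly: "f \<in> trig_poly \<Longrightarrow> continuous_on torus f"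
  by (induction rule: trig_poly.induct) (auto intro!: continuous_intros continuous_on_monom_pow)

text \<open>Products of trigonometric polynomials are trigonometric polynomials only on the torus,
  where s^-p is the conjugate of s^p; so Stone-Weierstrass is applied to their restrictions.\<close>

definition trig_poly_on_torus :: "(complex ^ 'd \<Rightarrow> real) set" where
  "trig_poly_on_torus = {f. \<exists>q\<in>trig_poly. \<forall>s\<in>torus. f s = q s}"

lemma trig_poly_on_torusI:
  "q \<in> trig_poly \<Longrightarrow> (\<And>s. s \<in> torus \<Longrightarrow> f s = q s) \<Longrightarrow> f \<in> trig_poly_on_torus"
  by (auto simp: trig_poly_on_torus_def)

lemma trig_poly_on_torus_add:
  assumes "f \<in> trig_poly_on_torus" and "g \<in> trig_poly_on_torus"
  shows "(\<lambda>s. f s + g s) \<in> trig_poly_on_torus"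
  using assms trig_poly.add by (force simp: trig_poly_on_torus_def)

lemma trig_poly_on_torus_mult_monom:
  fixes p q :: "int ^ 'd"
  shows "(\<lambda>s. Re (a * monom_pow s p) * Re (b * monom_pow s q)) \<in> trig_poly_on_torus"
proof (rule trig_poly_on_torusI)
  show "(\<lambda>s. Re (a * b / 2 * monom_pow s (p + q)) + Re (a * cnj b / 2 * monom_pow s (p - q)))
      \<in> trig_poly"
    by (intro trig_poly.intros)
  fix s :: "complex ^ 'd"
  assume s: "s \<in> torus"
  let ?z = "a * monom_pow s p" and ?w = "b * monom_pow s q"
  have sum: "a * b / 2 * monom_pow s (p + q) = ?z * ?w / 2"
    by (simp add: monom_pow_add[OF s])
  have diff: "a * cnj b / 2 * monom_pow s (p - q) = ?z * cnj ?w / 2"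
    using monom_pow_add[OF s, of p "- q"] by (simp add: monom_pow_uminus[OF s])
  have "Re ?z * Re ?w = Re (?z * ?w / 2) + Re (?z * cnj ?w / 2)"
    by (simp add: field_simps)
  then show "Re ?z * Re ?w =
      Re (a * b / 2 * monom_pow s (p + q)) + Re (a * cnj b / 2 * monom_pow s (p - q))"
    unfolding sum diff .
qed

lemma trig_poly_mult:
  assumes "f \<in> trig_poly" and "g \<in> trig_poly"
  shows "(\<lambda>s. f s * g s) \<in> trig_poly_on_torus"
  using assms
proof (induction arbitrary: g rule: trig_poly.induct)
  case (monom c p)
  then show ?case
  proof (induction rule: trig_poly.induct)
    case (add g1 g2)
    then show ?case
      using trig_poly_on_torus_add[OF add.IH] by (simp add: distrib_left)
  qed (rule trig_poly_on_torus_mult_monom)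
next
  case (add f1 f2)
  then show ?case
    using trig_poly_on_torus_add[OF add.IH] by (simp add: distrib_right)
qed

lemma function_ring_on_trig_poly_on_torus: "function_ring_on trig_poly_on_torus torus"
proof
  show "compact torus"
    by (rule compact_torus)
next
  fix f :: "complex ^ 'd \<Rightarrow> real"
  assume "f \<in> trig_poly_on_torus"
  then show "continuous_on torus f"
    using continuous_on_trig_poly continuous_on_cong by (fastforce simp: trig_poly_on_torus_def)
next
  fix f g :: "complex ^ 'd \<Rightarrow> real"
  assume "f \<in> trig_poly_on_torus" "g \<in> trig_poly_on_torus"
  then show "(\<lambda>s. f s + g s) \<in> trig_poly_on_torus"
    by (rule trig_poly_on_torus_add)
  from \<open>f \<in> trig_poly_on_torus\<close> \<open>g \<in> trig_poly_on_torus\<close>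
  obtain p q where "p \<in> trig_poly" "q \<in> trig_poly" "\<forall>s\<in>torus. f s = p s" "\<forall>s\<in>torus. g s = q s"
    by (auto simp: trig_poly_on_torus_def)
  then show "(\<lambda>s. f s * g s) \<in> trig_poly_on_torus"
    using trig_poly_mult[of p q] by (auto simp: trig_poly_on_torus_def)
next
  fix c :: real
  show "(\<lambda>_. c) \<in> trig_poly_on_torus"
    by (rule trig_poly_on_torusI[OF trig_poly.monom[of "complex_of_real c" 0]]) simp
next
  fix x y :: "complex ^ 'd"
  assume "x \<noteq> y"
  then obtain i where i: "x $ i \<noteq> y $ i"
    by (auto simp: vec_eq_iff)
  have coord: "(\<lambda>s. Re (c * s $ i)) \<in> trig_poly_on_torus" for c
    by (rule trig_poly_on_torusI[OF trig_poly.monom[of c "axis i 1"]]) (simp add: monom_pow_axis)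
  show "\<exists>f\<in>trig_poly_on_torus. f x \<noteq> f y"
  proof (cases "Re (x $ i) = Re (y $ i)")
    case True
    then have "Im (x $ i) \<noteq> Im (y $ i)"
      using i complex_eqI by blast
    then show ?thesis
      by (intro bexI[OF _ coord[of "- \<i>"]]) simp
  next
    case False
    then show ?thesis
      by (intro bexI[OF _ coord[of 1]]) simp
  qed
qed

lemma trig_poly_dense:
  assumes "continuous_on torus f" and "0 < e"
  obtains q where "q \<in> trig_poly" and "\<And>s. s \<in> torus \<Longrightarrow> \<bar>f s - q s\<bar> < e"
proof -
  interpret function_ring_on trig_poly_on_torus torus
    by (rule function_ring_on_trig_poly_on_torus)
  obtain g where "g \<in> trig_poly_on_torus" "\<forall>s\<in>torus. \<bar>f s - g s\<bar> < e"
    using Stone_Weierstrass_basic[OF assms] by blast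
  then show ?thesis
    using that by (force simp: trig_poly_on_torus_def)
qed

subsection \<open>Symmetrization under inversion\<close>

lemma continuous_on_symmetrized:
  fixes f :: "complex ^ 'd \<Rightarrow> real"
  shows "continuous_on torus f \<Longrightarrow> continuous_on torus (\<lambda>s. f s + f (tinv s))"
  by (intro continuous_on_add continuous_on_compose2[OF _ continuous_on_tinv])
    (auto intro: tinv_in_torus)

definition symmetrize :: "(complex ^ 'd) measure \<Rightarrow> (complex ^ 'd) measure" where
  "symmetrize \<nu> = add_measure \<nu> (distr \<nu> (restrict_space borel torus) tinv)"

context
  fixes \<nu> :: "(complex ^ 'd) measure"
  assumes sets_\<nu>: "sets \<nu> = sets (restrict_space borel torus)"
begin

lemma measurable_tinv: "tinv \<in> \<nu> \<rightarrow>\<^sub>M restrict_space borel torus"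
  by (intro measurable_restrict_space2 borel_measurable_continuous_on_sets_restrict[OF sets_\<nu>]
      continuous_on_tinv)
    (simp add: space_eq_if_sets_restrict_space[OF sets_\<nu>] tinv_in_torus)

lemma sets_symmetrize: "sets (symmetrize \<nu>) = sets (restrict_space borel torus)"
  by (simp add: symmetrize_def sets_\<nu>)

lemma nn_integral_symmetrize:
  assumes f: "f \<in> borel_measurable \<nu>"
  shows "(\<integral>\<^sup>+s. f s \<partial>symmetrize \<nu>) = (\<integral>\<^sup>+s. f s \<partial>\<nu>) + (\<integral>\<^sup>+s. f (tinv s) \<partial>\<nu>)"
proof -
  have "f \<in> borel_measurable (restrict_space borel torus)"
    using f sets_\<nu> by (simp cong: measurable_cong_sets)
  then show ?thesis
    using f sets_\<nu> by (simp add: symmetrize_def nn_integral_add_measure nn_integral_distr measurable_tinv)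
qed

lemma emeasure_symmetrize_torus_finite:
  assumes "finite_measure \<nu>"
  shows "emeasure (symmetrize \<nu>) torus \<noteq> \<infinity>"
proof -
  have "torus \<in> sets \<nu>"
    using sets.top[of \<nu>] by (simp add: space_eq_if_sets_restrict_space[OF sets_\<nu>])
  then show ?thesis
    using sets_\<nu> finite_measure.emeasure_finite[OF assms]
    by (simp add: symmetrize_def emeasure_add_measure emeasure_distr measurable_tinv)
qed

lemma nn_integral_symmetrize_continuous:
  fixes f :: "complex ^ 'd \<Rightarrow> real"
  assumes "finite_measure \<nu>" and f: "continuous_on torus f" and nonneg: "\<And>s. 0 \<le> f s"
  shows "(\<integral>\<^sup>+s. ennreal (f s) \<partial>symmetrize \<nu>) = ennreal (\<integral>s. f s + f (tinv s) \<partial>\<nu>)"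
proof -
  have "(\<lambda>s. f (tinv s)) \<in> borel_measurable \<nu>"
    using measurable_compose[OF measurable_tinv borel_measurable_continuous_on_restrict[OF f]] .
  then have "(\<integral>\<^sup>+s. ennreal (f s) \<partial>symmetrize \<nu>) =
      (\<integral>\<^sup>+s. ennreal (f s) + ennreal (f (tinv s)) \<partial>\<nu>)"
    using borel_measurable_continuous_on_sets_restrict[OF sets_\<nu> f]
    by (simp add: nn_integral_symmetrize nn_integral_add)
  also have "\<dots> = (\<integral>\<^sup>+s. ennreal (f s + f (tinv s)) \<partial>\<nu>)"
    using nonneg by (simp add: ennreal_plus)
  also have "\<dots> = ennreal (\<integral>s. f s + f (tinv s) \<partial>\<nu>)"
    using nonneg
    by (intro nn_integral_eq_integral integrable_continuous_on_compact[OF assms(1) sets_\<nu> compact_torus]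
        continuous_on_symmetrized f AE_I2) (simp add: add_nonneg_nonneg)
  finally show ?thesis .
qed

lemma nn_integral_symmetrize_invariant:
  assumes f: "f \<in> borel_measurable \<nu>" and invariant: "\<And>s. s \<in> torus \<Longrightarrow> f (tinv s) = f s"
  shows "(\<integral>\<^sup>+s. f s \<partial>symmetrize \<nu>) = 2 * (\<integral>\<^sup>+s. f s \<partial>\<nu>)"
proof -
  have "(\<integral>\<^sup>+s. f (tinv s) \<partial>\<nu>) = (\<integral>\<^sup>+s. f s \<partial>\<nu>)"
    using invariant by (intro nn_integral_cong) (simp add: space_eq_if_sets_restrict_space[OF sets_\<nu>])
  then show ?thesis
    using f by (simp add: nn_integral_symmetrize mult_2)
qed

end

context
  fixes \<nu>1 \<nu>2 :: "(complex ^ 'd) measure"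
  assumes finite_\<nu>1: "finite_measure \<nu>1" and finite_\<nu>2: "finite_measure \<nu>2"
    and sets_\<nu>1: "sets \<nu>1 = sets (restrict_space borel torus)"
    and sets_\<nu>2: "sets \<nu>2 = sets (restrict_space borel torus)"
    and Fourier_eq: "\<And>p. (\<integral>s. Re (monom_pow s p) \<partial>\<nu>1) = (\<integral>s. Re (monom_pow s p) \<partial>\<nu>2)"
begin

lemma integrable_continuous_on_torus:
  fixes f :: "complex ^ 'd \<Rightarrow> real"
  assumes "continuous_on torus f"
  shows "integrable \<nu>1 f" and "integrable \<nu>2 f"
  using integrable_continuous_on_compact[OF finite_\<nu>1 sets_\<nu>1 compact_torus assms]
    integrable_continuous_on_compact[OF finite_\<nu>2 sets_\<nu>2 compact_torus assms] .

lemma integral_symmetrized_trig_poly_eq: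
  assumes "q \<in> trig_poly"
  shows "(\<integral>s. q s + q (tinv s) \<partial>\<nu>1) = (\<integral>s. q s + q (tinv s) \<partial>\<nu>2)"
  using assms
proof (induction rule: trig_poly.induct)
  case (monom c p)
  have "Re (c * monom_pow s p) + Re (c * monom_pow (tinv s) p) = 2 * Re c * Re (monom_pow s p)"
    if "s \<in> torus" for s
    using that by (simp add: monom_pow_tinv inverse_unit_eq_cnj norm_monom_pow)
  then have "(\<integral>s. Re (c * monom_pow s p) + Re (c * monom_pow (tinv s) p) \<partial>\<nu>) =
      (\<integral>s. 2 * Re c * Re (monom_pow s p) \<partial>\<nu>)" if "sets \<nu> = sets (restrict_space borel torus)" for \<nu>
    by (intro Bochner_Integration.integral_cong) (simp_all add: space_eq_if_sets_restrict_space[OF that])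
  then show ?case
    using Fourier_eq sets_\<nu>1 sets_\<nu>2 by simp
next
  case (add f g)
  have "(\<lambda>s. f s + g s + (f (tinv s) + g (tinv s))) = (\<lambda>s. (f s + f (tinv s)) + (g s + g (tinv s)))"
    by (simp add: algebra_simps)
  moreover note continuous = continuous_on_symmetrized[OF continuous_on_trig_poly]
  ultimately show ?case
    using add by (simp add: Bochner_Integration.integral_add integrable_continuous_on_torus continuous)
qed

lemma integral_symmetrized_continuous_eq:
  fixes f :: "complex ^ 'd \<Rightarrow> real"
  assumes f: "continuous_on torus f"
  shows "(\<integral>s. f s + f (tinv s) \<partial>\<nu>1) = (\<integral>s. f s + f (tinv s) \<partial>\<nu>2)"
proof (rule integral_eq_if_uniform_approx[OF finite_\<nu>1 finite_\<nu>2, where T = torus])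
  show "space \<nu>1 = torus" "space \<nu>2 = torus"
    using space_eq_if_sets_restrict_space sets_\<nu>1 sets_\<nu>2 by blast+
  show "integrable \<nu>1 (\<lambda>s. f s + f (tinv s))" "integrable \<nu>2 (\<lambda>s. f s + f (tinv s))"
    using integrable_continuous_on_torus[OF continuous_on_symmetrized[OF f]] by auto
  fix e :: real
  assume "0 < e"
  then obtain q where q: "q \<in> trig_poly" "\<And>s. s \<in> torus \<Longrightarrow> \<bar>f s - q s\<bar> < e / 2"
    using trig_poly_dense[OF f, of "e / 2"] by auto
  have "\<bar>(f s + f (tinv s)) - (q s + q (tinv s))\<bar> \<le> e" if "s \<in> torus" for s
    using q(2)[OF that] q(2)[OF tinv_in_torus[OF that]] by linarith
  moreover note integrable_continuous_on_torus[OF continuous_on_symmetrized[OF continuous_on_trig_poly[OF q(1)]]]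
  ultimately show "\<exists>g. integrable \<nu>1 g \<and> integrable \<nu>2 g \<and> (\<integral>s. g s \<partial>\<nu>1) = (\<integral>s. g s \<partial>\<nu>2) \<and>
      (\<forall>s\<in>torus. \<bar>f s + f (tinv s) - g s\<bar> \<le> e)"
    using integral_symmetrized_trig_poly_eq[OF q(1)] by blast
qed

lemma symmetrize_eqI: "symmetrize \<nu>1 = symmetrize \<nu>2"
proof (rule measure_eqI_nn_integral_continuous[OF closed_torus])
  show "sets (symmetrize \<nu>1) = sets (restrict_space borel torus)"
    "sets (symmetrize \<nu>2) = sets (restrict_space borel torus)"
    using sets_symmetrize sets_\<nu>1 sets_\<nu>2 by blast+
  show "emeasure (symmetrize \<nu>1) torus \<noteq> \<infinity>"
    by (rule emeasure_symmetrize_torus_finite[OF sets_\<nu>1 finite_\<nu>1])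
  fix f :: "complex ^ 'd \<Rightarrow> real"
  assume "continuous_on torus f" "\<And>s. 0 \<le> f s"
  then show "(\<integral>\<^sup>+s. ennreal (f s) \<partial>symmetrize \<nu>1) = (\<integral>\<^sup>+s. ennreal (f s) \<partial>symmetrize \<nu>2)"
    using integral_symmetrized_continuous_eq
    by (simp add: nn_integral_symmetrize_continuous sets_\<nu>1 sets_\<nu>2 finite_\<nu>1 finite_\<nu>2)
qed

end

subsection \<open>Even sets\<close>

lemma vimage_tinv_even_borel:
  assumes "even_borel B"
  shows "tinv -` B = B"
  using assms by (simp add: even_borel_def flip: image_tinv_eq_vimage)

lemma nn_integral_inverse_weight_density_weight:
  assumes sets_\<rho>: "sets \<rho> = sets (restrict_space borel torus)"
    and A: "A \<in> sets borel" "A \<subseteq> torus" "(\<chi> i. 1) \<notin> A"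
  shows "(\<integral>\<^sup>+s. ennreal (1 / weight s) * indicator A s \<partial>density \<rho> (\<lambda>s. ennreal (weight s))) =
    emeasure \<rho> A"
proof -
  have [measurable]: "A \<in> sets borel"
    using A(1) .
  have "(\<lambda>s. ennreal (1 / weight s) * indicator A s) \<in> borel_measurable borel"
    by measurable
  then have "(\<integral>\<^sup>+s. ennreal (1 / weight s) * indicator A s \<partial>density \<rho> (\<lambda>s. ennreal (weight s))) =
      (\<integral>\<^sup>+s. ennreal (weight s) * (ennreal (1 / weight s) * indicator A s) \<partial>\<rho>)"
    by (intro nn_integral_density borel_measurable_sets_restrict[OF sets_\<rho>]) measurable
  also have "\<dots> = (\<integral>\<^sup>+s. indicator A s \<partial>\<rho>)"
  proof (intro nn_integral_cong)
    fix s
    assume "s \<in> space \<rho>"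
    then have s: "s \<in> torus"
      by (simp add: space_eq_if_sets_restrict_space[OF sets_\<rho>])
    show "ennreal (weight s) * (ennreal (1 / weight s) * indicator A s) = indicator A s"
    proof (cases "s \<in> A")
      case True
      then have "0 < weight s"
        using A(3) weight_pos[OF s] by auto
      then show ?thesis
        using True by (simp flip: ennreal_mult)
    qed simp
  qed
  also have "\<dots> = emeasure \<rho> A"
    using A by (simp add: sets_\<rho> sets_restrict_space_borel_iff)
  finally show ?thesis .
qed

lemma emeasure_even_eq_nn_integral_symmetrize:
  assumes sets_\<rho>: "sets \<rho> = sets (restrict_space borel torus)"
    and null: "emeasure \<rho> {\<chi> i. 1} = 0" and B: "even_borel B"
  shows "2 * emeasure \<rho> B = (\<integral>\<^sup>+s. ennreal (1 / weight s) * indicator (B - {\<chi> i. 1}) s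
    \<partial>symmetrize (density \<rho> (\<lambda>s. ennreal (weight s))))"
proof -
  let ?h = "\<lambda>s. ennreal (1 / weight s) * indicator (B - {\<chi> i. 1}) s"
  have B_torus: "B \<subseteq> torus" and [measurable]: "B \<in> sets borel"
    using B by (auto simp: even_borel_def)
  have sets_B: "{\<chi> i. 1} \<in> sets \<rho>" "B \<in> sets \<rho>"
    using B_torus one_in_torus by (auto simp: sets_\<rho> sets_restrict_space_borel_iff)
  have "?h (tinv s) = ?h s" if "s \<in> torus" for s
  proof -
    have "tinv s \<in> B \<longleftrightarrow> s \<in> B"
      using vimage_tinv_even_borel[OF B] by blast
    moreover have "tinv s = (\<chi> i. 1) \<longleftrightarrow> s = (\<chi> i. 1)"
      by (metis tinv_one tinv_tinv)
    ultimately show ?thesis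
      using weight_tinv[OF that] by (simp add: indicator_def)
  qed
  moreover have "?h \<in> borel_measurable borel"
    by measurable
  ultimately have "(\<integral>\<^sup>+s. ?h s \<partial>symmetrize (density \<rho> (\<lambda>s. ennreal (weight s)))) =
      2 * (\<integral>\<^sup>+s. ?h s \<partial>density \<rho> (\<lambda>s. ennreal (weight s)))"
    using sets_\<rho> by (intro nn_integral_symmetrize_invariant) (simp_all add: borel_measurable_sets_restrict)
  also have "(\<integral>\<^sup>+s. ?h s \<partial>density \<rho> (\<lambda>s. ennreal (weight s))) = emeasure \<rho> (B - {\<chi> i. 1})"
    using B_torus by (intro nn_integral_inverse_weight_density_weight[OF sets_\<rho>]) auto
  also have "\<dots> = emeasure \<rho> B"
    using sets_B null by (intro emeasure_Diff_null_set) (auto simp: null_sets_def)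
  finally show ?thesis ..
qed

theorem lemma6p1:
  fixes \<rho>1 \<rho>2 :: "(complex ^ 'd) measure"
  assumes sets1: "sets \<rho>1 = sets (restrict_space borel torus)"
    and sets2: "sets \<rho>2 = sets (restrict_space borel torus)"
    and one1: "emeasure \<rho>1 {\<chi> i. 1} = 0"
    and one2: "emeasure \<rho>2 {\<chi> i. 1} = 0"
    and int1: "integrable \<rho>1 (\<lambda>s. norm (one_minus_re s))"
    and int2: "integrable \<rho>2 (\<lambda>s. norm (one_minus_re s))"
    and eq: "\<And>p :: int ^ 'd.
      (\<integral>s. Re (1 - monom_pow s p) \<partial>\<rho>1) = (\<integral>s. Re (1 - monom_pow s p) \<partial>\<rho>2)"
    and B: "even_borel B"
  shows "emeasure \<rho>1 B = emeasure \<rho>2 B"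
proof -
  let ?\<nu>1 = "density \<rho>1 (\<lambda>s. ennreal (weight s))" and ?\<nu>2 = "density \<rho>2 (\<lambda>s. ennreal (weight s))"
  have "(\<integral>s. Re (monom_pow s p) \<partial>?\<nu>1) = (\<integral>s. Re (monom_pow s p) \<partial>?\<nu>2)" for p
    unfolding integral_Re_monom_pow_density_weight[OF sets1 int1]
      integral_Re_monom_pow_density_weight[OF sets2 int2] eq ..
  then have "symmetrize ?\<nu>1 = symmetrize ?\<nu>2"
    by (intro symmetrize_eqI finite_measure_density_weight[OF sets1 int1]
        finite_measure_density_weight[OF sets2 int2]) (simp_all add: sets1 sets2)
  then have "2 * emeasure \<rho>1 B = 2 * emeasure \<rho>2 B"
    using emeasure_even_eq_nn_integral_symmetrize[OF sets1 one1 B]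
      emeasure_even_eq_nn_integral_symmetrize[OF sets2 one2 B]
    by simp
  then show ?thesis
    by (simp add: ennreal_mult_cancel_left)
qed

end
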